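(* Let $A,B,C$ be logically independent events. Given $(x,y)\in[0,1]^2$, the assessment $P(C|A)=x$, $P(C|B)=y$, $P(C|(A\vee B))=z$ is coherent if and only if $z'\le z\le z''$, where \[ z'=\begin{cases}\dfrac{xy}{x+y-xy}, & (x,y)\neq(0,0),\\ 0, & (x,y)=(0,0),\end{cases}\qquad z''=\begin{cases}\dfrac{x+y-2xy}{1-xy}, & (x,y)\neq(1,1),\\ 1, & (x,y)=(1,1).\end{cases} \] Consequently, if $0\le\alpha_i\le\beta_i\le1$ ($i=1,2$) with $(\alpha_1,\alpha_2)\neq(0,0)$ and $(\beta_1,\beta_2)\neq(1,1)$, the set of values $z$ for which there exist $x\in[\alpha_1,\beta_1]$, $y\in[\alpha_2,\beta_2]$ making $(x,y,z)$ a coherent assessment on $(C|A,C|B,C|(A\vee B))$ is exactly $[\alpha_3,\beta_3]$ with \[ \alpha_3=\frac{\alpha_1\alpha_2}{\alpha_1+\alpha_2-\alpha_1\alpha_2},\qquad \beta_3=\frac{\beta_1+\beta_2-2\beta_1\beta_2}{1-\beta_1\beta_2}. \]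
   Context: Events are elements of a Boolean algebra; $AB$ denotes conjunction, $A\vee B$ disjunction, $A^c$ negation. $A,B,C$ are logically independent if all eight conjunctions $A^{*}B^{*}C^{*}$ (each $X^{*}\in\{X,X^c\}$) are possible (nonempty). A conditional event $E|H$ requires $H\neq\emptyset$; conditional probabilities are treated as primitive (no requirement that $P(H)>0$). Coherence (de Finetti): an assessment $(p_1,\dots,p_n)$ on conditional events $E_1|H_1,\dots,E_n|H_n$ is coherent if for every nonempty $J\subseteq\{1,\dots,n\}$ and every real numbers $s_j$ ($j\in J$), the random gain $G=\sum_{j\in J}s_j\,I_{H_j}(I_{E_j}-p_j)$ (with $I$ denoting indicator functions) satisfies $\max G\ge 0$, where the maximum is taken over the possible worlds (atoms) contained in $\bigvee_{j\in J}H_j$. *)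

theory Defs
  imports Main "HOL-Library.Indicator_Function"
begin

text \<open>Events are modelled as sets of possible worlds (a field of sets, i.e. a
Boolean algebra of sets): conjunction = intersection, disjunction = union,
negation = complement.\<close>

definition logically_independent3 :: "'w set \<Rightarrow> 'w set \<Rightarrow> 'w set \<Rightarrow> bool" where
  "logically_independent3 A B C \<longleftrightarrow>
     (\<forall>A' \<in> {A, -A}. \<forall>B' \<in> {B, -B}. \<forall>C' \<in> {C, -C}. A' \<inter> B' \<inter> C' \<noteq> {})"

text \<open>An assessment is a list of triples (E, H, p) meaning P(E|H) = p.
De Finetti coherence: every conditioning event is nonempty and, for every
nonempty subfamily J and every choice of real stakes s, the random gain
has a nonnegative value at some possible world in the disjunction of the
conditioning events of J.\<close>

definition coherent :: "('w set \<times> 'w set \<times> real) list \<Rightarrow> bool" where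
  "coherent L \<longleftrightarrow>
     (\<forall>j < length L. fst (snd (L ! j)) \<noteq> {}) \<and>
     (\<forall>J \<subseteq> {..<length L}. J \<noteq> {} \<longrightarrow>
       (\<forall>s :: nat \<Rightarrow> real.
          \<exists>w \<in> (\<Union>j\<in>J. fst (snd (L ! j))).
            (\<Sum>j\<in>J. s j * indicator (fst (snd (L ! j))) w *
                      (indicator (fst (L ! j)) w - snd (snd (L ! j)))) \<ge> 0))"

definition zlow :: "real \<Rightarrow> real \<Rightarrow> real" where
  "zlow x y = (if (x, y) \<noteq> (0, 0) then x * y / (x + y - x * y) else 0)"

definition zupp :: "real \<Rightarrow> real \<Rightarrow> real" where
  "zupp x y = (if (x, y) \<noteq> (1, 1) then (x + y - 2 * x * y) / (1 - x * y) else 1)"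

end

theory Submission
  imports Defs
begin

text \<open>The gain of bets with stakes s0, s1, s2 on C|A, C|B, C|A \<or> B depends only on which of
the six atoms of A \<or> B occurs, and logical independence makes all six possible. Coherence thus
means that no stakes make all six gains negative; the subfamilies betting on C|A or C|B alone
are harmless as x, y \<in> [0, 1].

If zlow x y \<le> z \<le> zupp x y, a nonnegative weighting of the atoms, mixing the two extreme
distributions described below, makes the expected gain vanish for every choice of stakes, so some
gain is nonnegative. If 0 \<le> z < zlow x y, the stakes (t y, t x, -x y) with z < t < zlow x y lose
on every atom; z > zupp x y reduces to this case by passing to the complement of C. The interval
statement follows from the monotonicity of zlow and zupp and from
zlow x y \<le> min x y \<le> max x y \<le> zupp x y.\<close>

section \<open>The bounds zlow and zupp\<close>

lemma zlow_commute: "zlow x y = zlow y x"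
  by (simp add: zlow_def algebra_simps)

lemma add_diff_mult_pos:
  fixes x y :: real
  assumes "0 \<le> x" "x \<le> 1" "0 \<le> y" "y \<le> 1" "(x, y) \<noteq> (0, 0)"
  shows "0 < x + y - x * y"
proof -
  have "0 \<le> y * (1 - x)" "0 \<le> x * (1 - y)" using assms by simp_all
  then have "x \<le> x + y - x * y" "y \<le> x + y - x * y" by (simp_all add: algebra_simps)
  moreover have "0 < x \<or> 0 < y" using assms by auto
  ultimately show ?thesis by linarith
qed

lemma one_diff_mult_pos:
  fixes x y :: real
  assumes "0 \<le> x" "x \<le> 1" "0 \<le> y" "y \<le> 1" "(x, y) \<noteq> (1, 1)"
  shows "0 < 1 - x * y"
  using add_diff_mult_pos[of "1 - x" "1 - y"] assms by (simp add: algebra_simps)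

lemma zlow_le_iff:
  fixes x y z :: real
  assumes "0 \<le> x" "x \<le> 1" "0 \<le> y" "y \<le> 1" "(x, y) \<noteq> (0, 0)"
  shows "zlow x y \<le> z \<longleftrightarrow> x * y \<le> z * (x + y - x * y)"
  using add_diff_mult_pos[OF assms] assms(5) by (simp add: zlow_def divide_le_eq)

lemma le_zupp_iff:
  fixes x y z :: real
  assumes "0 \<le> x" "x \<le> 1" "0 \<le> y" "y \<le> 1" "(x, y) \<noteq> (1, 1)"
  shows "z \<le> zupp x y \<longleftrightarrow> z * (1 - x * y) \<le> x + y - 2 * x * y"
  using one_diff_mult_pos[OF assms] assms(5) by (simp add: zupp_def le_divide_eq)

lemma zupp_eq_one_minus_zlow:
  fixes x y :: real
  assumes "0 \<le> x" "x \<le> 1" "0 \<le> y" "y \<le> 1"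
  shows "zupp x y = 1 - zlow (1 - x) (1 - y)"
proof (cases "(x, y) = (1, 1)")
  case True
  then show ?thesis by (simp add: zupp_def zlow_def)
next
  case False
  have "(1 - x) + (1 - y) - (1 - x) * (1 - y) = 1 - x * y" by (simp add: algebra_simps)
  then show ?thesis
    using False one_diff_mult_pos[OF assms False] by (simp add: zupp_def zlow_def field_simps)
qed

lemma zlow_nonneg:
  fixes x y :: real
  assumes "0 \<le> x" "x \<le> 1" "0 \<le> y" "y \<le> 1"
  shows "0 \<le> zlow x y"
  using add_diff_mult_pos[OF assms] assms by (cases "(x, y) = (0, 0)") (simp_all add: zlow_def)

lemma zlow_le_left:
  fixes x y :: real
  assumes "0 \<le> x" "x \<le> 1" "0 \<le> y" "y \<le> 1"
  shows "zlow x y \<le> x"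
proof (cases "(x, y) = (0, 0)")
  case True
  then show ?thesis by (simp add: zlow_def)
next
  case False
  have "x * (x + y - x * y) - x * y = x * x * (1 - y)" by (simp add: algebra_simps)
  moreover have "0 \<le> x * x * (1 - y)" using assms by simp
  ultimately show ?thesis using zlow_le_iff[OF assms False] by simp
qed

lemma zlow_le_min:
  fixes x y :: real
  assumes "0 \<le> x" "x \<le> 1" "0 \<le> y" "y \<le> 1"
  shows "zlow x y \<le> min x y"
  using zlow_le_left[of x y] zlow_le_left[of y x] zlow_commute[of x y] assms by simp

lemma max_le_zupp:
  fixes x y :: real
  assumes "0 \<le> x" "x \<le> 1" "0 \<le> y" "y \<le> 1"
  shows "max x y \<le> zupp x y"
  using zlow_le_min[of "1 - x" "1 - y"] zupp_eq_one_minus_zlow[OF assms] assms by simp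

lemma zlow_mono_left:
  fixes x x' y :: real
  assumes "0 \<le> x" "x \<le> x'" "x' \<le> 1" "0 \<le> y" "y \<le> 1"
  shows "zlow x y \<le> zlow x' y"
proof (cases "(x, y) = (0, 0)")
  case True
  then show ?thesis using zlow_nonneg[of x' y] assms by (simp add: zlow_def)
next
  case False
  then have ne': "(x', y) \<noteq> (0, 0)" using assms by auto
  have pos: "0 < x + y - x * y" "0 < x' + y - x' * y"
    using add_diff_mult_pos False ne' assms by simp_all
  have "x' * y * (x + y - x * y) - x * y * (x' + y - x' * y) = y * y * (x' - x)"
    by (simp add: algebra_simps)
  moreover have "0 \<le> y * y * (x' - x)" using assms by simp
  ultimately have "x * y * (x' + y - x' * y) \<le> x' * y * (x + y - x * y)" by linarith
  then show ?thesis
    using False ne' pos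
    by (simp add: zlow_def divide_le_eq le_divide_eq mult.commute mult.left_commute)
qed

lemma zlow_mono:
  fixes x x' y y' :: real
  assumes "0 \<le> x" "x \<le> x'" "x' \<le> 1" "0 \<le> y" "y \<le> y'" "y' \<le> 1"
  shows "zlow x y \<le> zlow x' y'"
  using zlow_mono_left[of x x' y] zlow_mono_left[of y y' x'] zlow_commute[of x' y]
    zlow_commute[of x' y'] assms
  by simp

lemma zupp_mono:
  fixes x x' y y' :: real
  assumes "0 \<le> x" "x \<le> x'" "x' \<le> 1" "0 \<le> y" "y \<le> y'" "y' \<le> 1"
  shows "zupp x y \<le> zupp x' y'"
  using zlow_mono[of "1 - x'" "1 - x" "1 - y'" "1 - y"] zupp_eq_one_minus_zlow[of x y]
    zupp_eq_one_minus_zlow[of x' y'] assms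
  by simp

lemma zlow_zupp_range:
  fixes \<alpha>1 \<beta>1 \<alpha>2 \<beta>2 :: real
  assumes "0 \<le> \<alpha>1" "\<alpha>1 \<le> \<beta>1" "\<beta>1 \<le> 1" "0 \<le> \<alpha>2" "\<alpha>2 \<le> \<beta>2" "\<beta>2 \<le> 1"
  shows "{z. \<exists>x\<in>{\<alpha>1..\<beta>1}. \<exists>y\<in>{\<alpha>2..\<beta>2}. zlow x y \<le> z \<and> z \<le> zupp x y}
       = {zlow \<alpha>1 \<alpha>2 .. zupp \<beta>1 \<beta>2}"
proof (intro set_eqI iffI)
  fix z
  assume "z \<in> {z. \<exists>x\<in>{\<alpha>1..\<beta>1}. \<exists>y\<in>{\<alpha>2..\<beta>2}. zlow x y \<le> z \<and> z \<le> zupp x y}"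
  then obtain x y where "x \<in> {\<alpha>1..\<beta>1}" "y \<in> {\<alpha>2..\<beta>2}" "zlow x y \<le> z" "z \<le> zupp x y"
    by blast
  moreover have "zlow \<alpha>1 \<alpha>2 \<le> zlow x y" "zupp x y \<le> zupp \<beta>1 \<beta>2"
    using zlow_mono[of \<alpha>1 x \<alpha>2 y] zupp_mono[of x \<beta>1 y \<beta>2] calculation(1,2) assms by auto
  ultimately show "z \<in> {zlow \<alpha>1 \<alpha>2 .. zupp \<beta>1 \<beta>2}" by simp
next
  fix z
  assume z: "z \<in> {zlow \<alpha>1 \<alpha>2 .. zupp \<beta>1 \<beta>2}"
  define x where "x = max \<alpha>1 (min z \<beta>1)"
  define y where "y = max \<alpha>2 (min z \<beta>2)"
  have box: "x \<in> {\<alpha>1..\<beta>1}" "y \<in> {\<alpha>2..\<beta>2}" using assms by (auto simp: x_def y_def)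
  then have unit: "0 \<le> x" "x \<le> 1" "0 \<le> y" "y \<le> 1" using assms by auto
  have "zlow x y \<le> z"
  proof (cases "z < \<alpha>1 \<and> z < \<alpha>2")
    case True
    then have "x = \<alpha>1" "y = \<alpha>2" by (auto simp: x_def y_def)
    then show ?thesis using z by simp
  next
    case False
    then have "min x y \<le> z" by (auto simp: x_def y_def)
    then show ?thesis using zlow_le_min[OF unit] by linarith
  qed
  moreover have "z \<le> zupp x y"
  proof (cases "\<beta>1 < z \<and> \<beta>2 < z")
    case True
    then have "x = \<beta>1" "y = \<beta>2" using assms by (auto simp: x_def y_def)
    then show ?thesis using z by simp
  next
    case False
    then have "z \<le> max x y" by (auto simp: x_def y_def)
    then show ?thesis using max_le_zupp[OF unit] by linarith
  qed
  ultimately show "z \<in> {z. \<exists>x\<in>{\<alpha>1..\<beta>1}. \<exists>y\<in>{\<alpha>2..\<beta>2}. zlow x y \<le> z \<and> z \<le> zupp x y}"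
    using box by blast
qed

section \<open>Sure loss on the atoms of A \<or> B\<close>

text \<open>An atom (a, b, c) lists the truth values of A, B and C at a possible world.\<close>

definition union_atoms :: "(bool \<times> bool \<times> bool) set" where
  "union_atoms = {(a, b, c). a \<or> b}"

definition atom_gain ::
    "real \<Rightarrow> real \<Rightarrow> real \<Rightarrow> real \<Rightarrow> real \<Rightarrow> real \<Rightarrow> bool \<times> bool \<times> bool \<Rightarrow> real" where
  "atom_gain x y z s0 s1 s2 = (\<lambda>(a, b, c).
     s0 * of_bool a * (of_bool c - x) + s1 * of_bool b * (of_bool c - y)
     + s2 * of_bool (a \<or> b) * (of_bool c - z))"

definition avoids_sure_loss :: "real \<Rightarrow> real \<Rightarrow> real \<Rightarrow> bool" where
  "avoids_sure_loss x y z \<longleftrightarrow> (\<forall>s0 s1 s2. \<exists>p\<in>union_atoms. 0 \<le> atom_gain x y z s0 s1 s2 p)"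

lemma sum_union_atoms:
  "(\<Sum>p\<in>union_atoms. f p) =
     f (True, True, True) + f (True, True, False) + f (True, False, True)
     + f (True, False, False) + f (False, True, True) + f (False, True, False)"
proof -
  have atoms: "union_atoms = {(True, True, True), (True, True, False), (True, False, True),
      (True, False, False), (False, True, True), (False, True, False)}"
    by (auto simp: union_atoms_def)
  show ?thesis unfolding atoms by (simp add: ac_simps)
qed

lemma atom_gain_complement:
  "atom_gain x y z s0 s1 s2 (a, b, c)
     = atom_gain (1 - x) (1 - y) (1 - z) (- s0) (- s1) (- s2) (a, b, \<not> c)"
  by (cases c) (simp_all add: atom_gain_def algebra_simps)

lemma avoids_sure_loss_complement:
  assumes "avoids_sure_loss x y z"
  shows "avoids_sure_loss (1 - x) (1 - y) (1 - z)"
  unfolding avoids_sure_loss_def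
proof (intro allI)
  fix s0 s1 s2 :: real
  obtain a b c where "(a, b, c) \<in> union_atoms" "0 \<le> atom_gain x y z (- s0) (- s1) (- s2) (a, b, c)"
    using assms[unfolded avoids_sure_loss_def, rule_format, of "- s0" "- s1" "- s2"] by auto
  moreover have "(a, b, \<not> c) \<in> union_atoms" using calculation(1) by (simp add: union_atoms_def)
  ultimately show "\<exists>p\<in>union_atoms. 0 \<le> atom_gain (1 - x) (1 - y) (1 - z) s0 s1 s2 p"
    by (metis atom_gain_complement minus_minus)
qed

lemma weighted_sum_zero_imp_nonneg:
  fixes w g :: "'a \<Rightarrow> real"
  assumes "finite S" "\<And>i. i \<in> S \<Longrightarrow> 0 \<le> w i" "0 < sum w S" "(\<Sum>i\<in>S. w i * g i) = 0"
  shows "\<exists>i\<in>S. 0 \<le> g i"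
proof (rule ccontr)
  assume "\<not> ?thesis"
  then have neg: "g i < 0" if "i \<in> S" for i using that by auto
  obtain k where k: "k \<in> S" "0 < w k" using assms(3) sum_nonpos[of S w] by (meson not_less)
  have "\<forall>i\<in>S. w i * g i \<le> 0" using assms(2) neg by (simp add: mult_nonneg_nonpos less_imp_le)
  moreover have "w k * g k < 0" using k neg by (simp add: mult_pos_neg)
  ultimately have "(\<Sum>i\<in>S. w i * g i) < (\<Sum>i\<in>S. 0)"
    using k assms(1) by (intro sum_strict_mono_ex1) auto
  with assms(4) show False by simp
qed

lemma avoids_sure_loss_if_fair_weight:
  assumes "\<And>p. 0 \<le> w p" "0 < sum w union_atoms"
    and "\<And>s0 s1 s2. (\<Sum>p\<in>union_atoms. w p * atom_gain x y z s0 s1 s2 p) = 0"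
  shows "avoids_sure_loss x y z"
  unfolding avoids_sure_loss_def
  using weighted_sum_zero_imp_nonneg[of union_atoms w] assms by (simp add: union_atoms_def)

text \<open>lower_weight x y is the law of (A, B, C) when A and B are independent with probabilities
y and x and C = A \<inter> B; then P(C|A) = x, P(C|B) = y and P(C|A \<or> B) = zlow x y. Under
upper_weight x y, A and B are independent with probabilities 1 - y and 1 - x and C is their
symmetric difference; again P(C|A) = x, P(C|B) = y, but P(C|A \<or> B) = zupp x y.\<close>

definition lower_weight :: "real \<Rightarrow> real \<Rightarrow> bool \<times> bool \<times> bool \<Rightarrow> real" where
  "lower_weight x y = (\<lambda>(a, b, c).
     of_bool (c = (a \<and> b)) * (if a then y else 1 - y) * (if b then x else 1 - x))"

definition upper_weight :: "real \<Rightarrow> real \<Rightarrow> bool \<times> bool \<times> bool \<Rightarrow> real" where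
  "upper_weight x y = (\<lambda>(a, b, c).
     of_bool (c = (a \<noteq> b)) * (if a then 1 - y else y) * (if b then 1 - x else x))"

lemma lower_upper_weight_nonneg:
  fixes x y :: real
  assumes "0 \<le> x" "x \<le> 1" "0 \<le> y" "y \<le> 1"
  shows "0 \<le> lower_weight x y p" "0 \<le> upper_weight x y p"
  using assms by (auto simp: lower_weight_def upper_weight_def split: prod.split)

lemma sum_lower_weight: "sum (lower_weight x y) union_atoms = x + y - x * y"
  by (simp add: sum_union_atoms lower_weight_def algebra_simps)

lemma sum_upper_weight: "sum (upper_weight x y) union_atoms = 1 - x * y"
  by (simp add: sum_union_atoms upper_weight_def algebra_simps)

lemma expected_gain_lower_weight:
  "(\<Sum>p\<in>union_atoms. lower_weight x y p * atom_gain x y z s0 s1 s2 p)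
     = s2 * (x * y - z * (x + y - x * y))"
  unfolding sum_union_atoms lower_weight_def atom_gain_def by simp algebra

lemma expected_gain_upper_weight:
  "(\<Sum>p\<in>union_atoms. upper_weight x y p * atom_gain x y z s0 s1 s2 p)
     = s2 * (x + y - 2 * x * y - z * (1 - x * y))"
  unfolding sum_union_atoms upper_weight_def atom_gain_def by simp algebra

lemma avoids_sure_loss_if_mixture:
  fixes x y z \<alpha> \<beta> :: real
  assumes x: "0 \<le> x" "x \<le> 1" and y: "0 \<le> y" "y \<le> 1" and "0 \<le> \<alpha>" "0 \<le> \<beta>"
    and mass: "0 < \<alpha> * (x + y - x * y) + \<beta> * (1 - x * y)"
    and fair: "\<alpha> * (x * y - z * (x + y - x * y)) + \<beta> * (x + y - 2 * x * y - z * (1 - x * y)) = 0"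
  shows "avoids_sure_loss x y z"
proof (rule avoids_sure_loss_if_fair_weight)
  define w where "w p = \<alpha> * lower_weight x y p + \<beta> * upper_weight x y p" for p
  show "0 \<le> w p" for p
    using lower_upper_weight_nonneg[OF x y] \<open>0 \<le> \<alpha>\<close> \<open>0 \<le> \<beta>\<close> by (simp add: w_def)
  show "0 < sum w union_atoms"
    using mass
    by (simp add: w_def sum.distrib sum_distrib_left[symmetric] sum_lower_weight sum_upper_weight)
  fix s0 s1 s2 :: real
  have "(\<Sum>p\<in>union_atoms. w p * atom_gain x y z s0 s1 s2 p)
      = \<alpha> * (\<Sum>p\<in>union_atoms. lower_weight x y p * atom_gain x y z s0 s1 s2 p)
        + \<beta> * (\<Sum>p\<in>union_atoms. upper_weight x y p * atom_gain x y z s0 s1 s2 p)"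
    by (simp add: w_def distrib_right sum.distrib sum_distrib_left[symmetric] mult.assoc)
  also have "\<dots> = s2 * (\<alpha> * (x * y - z * (x + y - x * y))
      + \<beta> * (x + y - 2 * x * y - z * (1 - x * y)))"
    by (simp add: expected_gain_lower_weight expected_gain_upper_weight algebra_simps)
  finally show "(\<Sum>p\<in>union_atoms. w p * atom_gain x y z s0 s1 s2 p) = 0"
    using fair by simp
qed

lemma avoids_sure_loss_if_between:
  fixes x y z :: real
  assumes x: "0 \<le> x" "x \<le> 1" and y: "0 \<le> y" "y \<le> 1"
    and lo: "zlow x y \<le> z" and up: "z \<le> zupp x y"
  shows "avoids_sure_loss x y z"
proof (cases "(x, y) = (0, 0) \<or> (x, y) = (1, 1)")
  case True
  then have "(x, y, z) = (0, 0, 0) \<or> (x, y, z) = (1, 1, 1)"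
    using lo up by (auto simp: zlow_def zupp_def)
  then have "atom_gain x y z s0 s1 s2 (True, True, z = 1) = 0" for s0 s1 s2
    by (auto simp: atom_gain_def)
  moreover have "(True, True, z = 1) \<in> union_atoms" by (simp add: union_atoms_def)
  ultimately show ?thesis unfolding avoids_sure_loss_def by (metis order_refl)
next
  case False
  define SL where "SL = x + y - x * y"
  define SU where "SU = 1 - x * y"
  have "0 < SL" "0 < SU"
    using add_diff_mult_pos[OF x y] one_diff_mult_pos[OF x y] False by (auto simp: SL_def SU_def)
  have "x * y \<le> z * SL" "z * SU \<le> x + y - 2 * x * y"
    using zlow_le_iff[OF x y] le_zupp_iff[OF x y] lo up False by (auto simp: SL_def SU_def)
  show ?thesis
  proof (cases "z * SL = x * y")
    case True
    then show ?thesis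
      using avoids_sure_loss_if_mixture[OF x y, of 1 0] \<open>0 < SL\<close> by (simp add: SL_def SU_def)
  next
    case False
    then have "0 < (z * SL - x * y) * SU"
      using \<open>x * y \<le> z * SL\<close> \<open>0 < SU\<close> by simp
    moreover have "0 \<le> (x + y - 2 * x * y - z * SU) * SL"
      using \<open>z * SU \<le> x + y - 2 * x * y\<close> \<open>0 < SL\<close> by simp
    ultimately show ?thesis
      using avoids_sure_loss_if_mixture[OF x y, of "x + y - 2 * x * y - z * SU" "z * SL - x * y"]
        \<open>x * y \<le> z * SL\<close> \<open>z * SU \<le> x + y - 2 * x * y\<close>
      by (simp add: SL_def SU_def algebra_simps)
  qed
qed

lemma not_avoids_sure_loss_below_zlow:
  fixes x y z :: real
  assumes x: "0 \<le> x" "x \<le> 1" and y: "0 \<le> y" "y \<le> 1" and below: "z < zlow x y"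
  shows "\<not> avoids_sure_loss x y z"
proof -
  have "\<exists>s0 s1 s2. \<forall>p\<in>union_atoms. atom_gain x y z s0 s1 s2 p < 0"
  proof (cases "z < 0")
    case True
    then have "\<forall>p\<in>union_atoms. atom_gain x y z 0 0 (- 1) p < 0"
      by (auto simp: union_atoms_def atom_gain_def)
    then show ?thesis by blast
  next
    case False
    then have ne: "(x, y) \<noteq> (0, 0)" using below by (auto simp: zlow_def)
    obtain t where "z < t" "t < zlow x y" using below dense by blast
    then have t_SL: "t * (x + y - x * y) < x * y" using zlow_le_iff[OF x y ne, of t] by simp
    have "0 < t" using False \<open>z < t\<close> by simp
    then have "0 < t * (x + y - x * y)" using add_diff_mult_pos[OF x y ne] by simp
    then have "0 < x * y" using t_SL by linarith
    have "x * y * z < x * y * t" using \<open>z < t\<close> \<open>0 < x * y\<close> by (rule mult_strict_left_mono)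
    moreover have "0 \<le> t * x * (1 - y)" "0 \<le> t * y * (1 - x)" "0 < t * x * y"
      using x y \<open>0 < t\<close> \<open>0 < x * y\<close> by (simp_all add: mult.assoc)
    moreover have "t * x + t * y - t * x * y < x * y" using t_SL by (simp add: algebra_simps)
    ultimately have "\<forall>p\<in>union_atoms. atom_gain x y z (t * y) (t * x) (- (x * y)) p < 0"
      by (auto simp: union_atoms_def atom_gain_def algebra_simps)
    then show ?thesis by blast
  qed
  then show ?thesis unfolding avoids_sure_loss_def by (meson not_le)
qed

lemma not_avoids_sure_loss_above_zupp:
  fixes x y z :: real
  assumes x: "0 \<le> x" "x \<le> 1" and y: "0 \<le> y" "y \<le> 1" and above: "zupp x y < z"
  shows "\<not> avoids_sure_loss x y z"
proof -
  have "1 - z < zlow (1 - x) (1 - y)" using above zupp_eq_one_minus_zlow[OF x y] by simp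
  then have "\<not> avoids_sure_loss (1 - x) (1 - y) (1 - z)"
    using not_avoids_sure_loss_below_zlow[of "1 - x" "1 - y" "1 - z"] x y by simp
  then show ?thesis using avoids_sure_loss_complement by blast
qed

lemma avoids_sure_loss_iff:
  fixes x y z :: real
  assumes "0 \<le> x" "x \<le> 1" "0 \<le> y" "y \<le> 1"
  shows "avoids_sure_loss x y z \<longleftrightarrow> zlow x y \<le> z \<and> z \<le> zupp x y"
  using avoids_sure_loss_if_between[OF assms] not_avoids_sure_loss_below_zlow[OF assms]
    not_avoids_sure_loss_above_zupp[OF assms]
  by (meson not_le)

section \<open>Coherence of the assessment on C|A, C|B, C|A \<or> B\<close>

definition union_assessment ::
    "'w set \<Rightarrow> 'w set \<Rightarrow> 'w set \<Rightarrow> real \<Rightarrow> real \<Rightarrow> real \<Rightarrow> ('w set \<times> 'w set \<times> real) list" where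
  "union_assessment A B C x y z = [(C, A, x), (C, B, y), (C, A \<union> B, z)]"

lemma union_assessment_simps:
  "length (union_assessment A B C x y z) = 3"
  "union_assessment A B C x y z ! 0 = (C, A, x)"
  "union_assessment A B C x y z ! 1 = (C, B, y)"
  "union_assessment A B C x y z ! 2 = (C, A \<union> B, z)"
  by (simp_all add: union_assessment_def numeral_2_eq_2)

lemma union_assessment_conditioning_bounds:
  fixes A B C :: "'w set" and x y z :: real
  defines "L \<equiv> union_assessment A B C x y z"
  assumes "j < 3"
  shows "A \<inter> B \<subseteq> fst (snd (L ! j))" "fst (snd (L ! j)) \<subseteq> A \<union> B"
proof -
  have "j = 0 \<or> j = 1 \<or> j = 2" using assms(2) by auto
  then have "fst (snd (L ! j)) \<in> {A, B, A \<union> B}"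
    by (elim disjE) (simp_all add: L_def union_assessment_def numeral_2_eq_2)
  then show "A \<inter> B \<subseteq> fst (snd (L ! j))" "fst (snd (L ! j)) \<subseteq> A \<union> B" by auto
qed

lemma union_assessment_conditioning_Union:
  fixes A B C :: "'w set" and x y z :: real
  defines "L \<equiv> union_assessment A B C x y z"
  assumes "J \<subseteq> {..<3}" "2 \<in> J \<or> {0, 1} \<subseteq> J"
  shows "(\<Union>j\<in>J. fst (snd (L ! j))) = A \<union> B"
proof
  show "(\<Union>j\<in>J. fst (snd (L ! j))) \<subseteq> A \<union> B"
  proof (rule UN_least)
    fix j assume "j \<in> J"
    then have "j < 3" using assms(2) by auto
    then show "fst (snd (L ! j)) \<subseteq> A \<union> B"
      unfolding L_def by (rule union_assessment_conditioning_bounds(2))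
  qed
  have "fst (snd (L ! j)) \<subseteq> (\<Union>j\<in>J. fst (snd (L ! j)))" if "j \<in> J" for j
    using that by blast
  then show "A \<union> B \<subseteq> (\<Union>j\<in>J. fst (snd (L ! j)))"
    using assms(3) by (metis L_def Un_least insert_subset union_assessment_simps(2-4) fst_conv snd_conv)
qed

lemma random_gain_union_assessment:
  fixes A B C :: "'w set" and x y z :: real and s :: "nat \<Rightarrow> real"
  defines "L \<equiv> union_assessment A B C x y z"
  assumes "J \<subseteq> {..<3}"
  shows "(\<Sum>j\<in>J. s j * indicator (fst (snd (L ! j))) w * (indicator (fst (L ! j)) w - snd (snd (L ! j))))
     = atom_gain x y z (if 0 \<in> J then s 0 else 0) (if 1 \<in> J then s 1 else 0) (if 2 \<in> J then s 2 else 0)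
         (w \<in> A, w \<in> B, w \<in> C)" (is "sum ?f J = _")
proof -
  have "{0, 1, 2} \<inter> J = J" using assms(2) by auto
  then have "sum ?f J = (\<Sum>j\<in>{0, 1, 2}. if j \<in> J then ?f j else 0)"
    using sum.inter_restrict[of "{0, 1, 2}" ?f J] by simp
  also have "\<dots> = atom_gain x y z (if 0 \<in> J then s 0 else 0) (if 1 \<in> J then s 1 else 0)
      (if 2 \<in> J then s 2 else 0) (w \<in> A, w \<in> B, w \<in> C)"
    by (simp add: L_def union_assessment_def atom_gain_def indicator_def numeral_2_eq_2 One_nat_def)
  finally show ?thesis .
qed

lemma logically_independent3_atom:
  assumes "logically_independent3 A B C"
  obtains w where "(w \<in> A, w \<in> B, w \<in> C) = p"
proof -
  obtain a b c where p: "p = (a, b, c)" by (cases p)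
  have "(if a then A else - A) \<inter> (if b then B else - B) \<inter> (if c then C else - C) \<noteq> {}"
    using assms unfolding logically_independent3_def by (cases a; cases b; cases c) simp_all
  then obtain w where "w \<in> (if a then A else - A) \<inter> (if b then B else - B) \<inter> (if c then C else - C)"
    by blast
  then show thesis by (intro that[of w]) (auto simp: p split: if_splits)
qed

lemma exists_world_nonneg_bet:
  fixes p s :: real
  assumes "logically_independent3 A B C" "0 \<le> p" "p \<le> 1"
  shows "\<exists>w\<in>A \<inter> B. 0 \<le> s * (of_bool (w \<in> C) - p)"
proof -
  obtain w where w: "(w \<in> A, w \<in> B, w \<in> C) = (True, True, 0 \<le> s)"
    using logically_independent3_atom[OF assms(1)] by blast
  have "0 \<le> s * (of_bool (w \<in> C) - p)"
  proof (cases "0 \<le> s")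
    case True
    then show ?thesis using w assms(3) by simp
  next
    case False
    then show ?thesis using w assms(2) mult_nonpos_nonneg[of s p] by simp
  qed
  then show ?thesis using w by auto
qed

lemma coherent_imp_avoids_sure_loss:
  assumes "coherent (union_assessment A B C x y z)"
  shows "avoids_sure_loss x y z"
  unfolding avoids_sure_loss_def
proof (intro allI)
  fix s0 s1 s2 :: real
  define L where "L = union_assessment A B C x y z"
  define s where "s j = (if j = 0 then s0 else if j = 1 then s1 else s2)" for j :: nat
  have Union: "(\<Union>j\<in>{..<3}. fst (snd (L ! j))) = A \<union> B"
    unfolding L_def by (rule union_assessment_conditioning_Union) auto
  have gain: "(\<Sum>j\<in>{..<3}. s j * indicator (fst (snd (L ! j))) w *
                              (indicator (fst (L ! j)) w - snd (snd (L ! j))))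
      = atom_gain x y z s0 s1 s2 (w \<in> A, w \<in> B, w \<in> C)" for w
    using random_gain_union_assessment[where J = "{..<3}" and A = A and B = B and C = C
        and x = x and y = y and z = z and s = s and w = w]
    by (simp add: L_def s_def)
  have "\<exists>w\<in>(\<Union>j\<in>{..<3}. fst (snd (L ! j))).
      0 \<le> (\<Sum>j\<in>{..<3}. s j * indicator (fst (snd (L ! j))) w *
                          (indicator (fst (L ! j)) w - snd (snd (L ! j))))"
    using assms[unfolded coherent_def, THEN conjunct2, rule_format, of "{..<3}" s]
    by (simp add: L_def union_assessment_simps lessThan_empty_iff)
  then obtain w where "w \<in> A \<union> B" "0 \<le> atom_gain x y z s0 s1 s2 (w \<in> A, w \<in> B, w \<in> C)"
    unfolding Union gain by blast
  moreover have "(w \<in> A, w \<in> B, w \<in> C) \<in> union_atoms"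
    using calculation(1) by (simp add: union_atoms_def)
  ultimately show "\<exists>p\<in>union_atoms. 0 \<le> atom_gain x y z s0 s1 s2 p" by blast
qed

lemma nonempty_subset_lessThan_3_cases:
  assumes "J \<subseteq> {..<3::nat}" "J \<noteq> {}"
  shows "J = {0} \<or> J = {1} \<or> 2 \<in> J \<or> {0, 1} \<subseteq> J"
proof -
  have "J \<subseteq> {0, 1, 2}" using assms(1) by auto
  then show ?thesis using assms(2) by (cases "0 \<in> J"; cases "1 \<in> J") blast+
qed

lemma exists_nonneg_subfamily_gain:
  fixes A B C :: "'w set" and x y z :: real and s :: "nat \<Rightarrow> real"
  defines "L \<equiv> union_assessment A B C x y z"
  assumes indep: "logically_independent3 A B C"
    and x: "0 \<le> x" "x \<le> 1" and y: "0 \<le> y" "y \<le> 1"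
    and avoids: "avoids_sure_loss x y z"
    and J: "J \<subseteq> {..<3}" "J \<noteq> {}"
  shows "\<exists>w\<in>(\<Union>j\<in>J. fst (snd (L ! j))).
    0 \<le> atom_gain x y z (if 0 \<in> J then s 0 else 0) (if 1 \<in> J then s 1 else 0)
           (if 2 \<in> J then s 2 else 0) (w \<in> A, w \<in> B, w \<in> C)"
proof -
  let ?stake = "\<lambda>j. if j \<in> J then s j else 0"
  consider "J = {0}" | "J = {1}" | "(\<Union>j\<in>J. fst (snd (L ! j))) = A \<union> B"
    using nonempty_subset_lessThan_3_cases[OF J]
      union_assessment_conditioning_Union[OF J(1), of A B C x y z]
    unfolding L_def by blast
  then show ?thesis
  proof cases
    case 1
    obtain w where "w \<in> A \<inter> B" "0 \<le> s 0 * (of_bool (w \<in> C) - x)"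
      using exists_world_nonneg_bet[OF indep x] by blast
    with 1 show ?thesis
      by (intro bexI[of _ w]) (simp_all add: L_def union_assessment_def atom_gain_def)
  next
    case 2
    obtain w where "w \<in> A \<inter> B" "0 \<le> s 1 * (of_bool (w \<in> C) - y)"
      using exists_world_nonneg_bet[OF indep y] by blast
    with 2 show ?thesis
      by (intro bexI[of _ w]) (simp_all add: L_def union_assessment_def atom_gain_def)
  next
    case 3
    obtain p where "p \<in> union_atoms" "0 \<le> atom_gain x y z (?stake 0) (?stake 1) (?stake 2) p"
      using avoids[unfolded avoids_sure_loss_def, rule_format, of "?stake 0" "?stake 1" "?stake 2"]
      by blast
    moreover obtain w where "(w \<in> A, w \<in> B, w \<in> C) = p"
      using logically_independent3_atom[OF indep] by blast
    ultimately show ?thesis unfolding 3 by (intro bexI[of _ w]) (auto simp: union_atoms_def)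
  qed
qed

lemma avoids_sure_loss_imp_coherent:
  fixes A B C :: "'w set" and x y z :: real
  assumes indep: "logically_independent3 A B C"
    and x: "0 \<le> x" "x \<le> 1" and y: "0 \<le> y" "y \<le> 1"
    and avoids: "avoids_sure_loss x y z"
  shows "coherent (union_assessment A B C x y z)"
proof -
  define L where "L = union_assessment A B C x y z"
  show ?thesis
    unfolding coherent_def L_def[symmetric]
  proof (intro conjI allI impI)
    fix j assume "j < length L"
    moreover obtain w0 where "w0 \<in> A" "w0 \<in> B"
      using logically_independent3_atom[OF indep, of "(True, True, True)"] by auto
    ultimately show "fst (snd (L ! j)) \<noteq> {}"
      using union_assessment_conditioning_bounds(1)[of j A B C x y z]
      by (auto simp: L_def union_assessment_simps)
  next
    fix J :: "nat set" and s :: "nat \<Rightarrow> real"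
    assume "J \<subseteq> {..<length L}" "J \<noteq> {}"
    then have J: "J \<subseteq> {..<3}" "J \<noteq> {}" by (simp_all add: L_def union_assessment_simps)
    show "\<exists>w\<in>(\<Union>j\<in>J. fst (snd (L ! j))).
        0 \<le> (\<Sum>j\<in>J. s j * indicator (fst (snd (L ! j))) w *
                       (indicator (fst (L ! j)) w - snd (snd (L ! j))))"
      using exists_nonneg_subfamily_gain[OF indep x y avoids J, of s]
      by (simp add: L_def random_gain_union_assessment[OF J(1)])
  qed
qed

lemma coherent_iff_between:
  fixes A B C :: "'w set" and x y z :: real
  assumes "logically_independent3 A B C" "0 \<le> x" "x \<le> 1" "0 \<le> y" "y \<le> 1"
  shows "coherent [(C, A, x), (C, B, y), (C, A \<union> B, z)] \<longleftrightarrow> zlow x y \<le> z \<and> z \<le> zupp x y"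
  using coherent_imp_avoids_sure_loss[of A B C x y z] avoids_sure_loss_imp_coherent[OF assms]
    avoids_sure_loss_iff[OF assms(2-5)]
  unfolding union_assessment_def by blast

theorem mainTheorem2:
  fixes A B C :: "'w set"
  assumes indep: "logically_independent3 A B C"
  shows "(\<forall>x y z :: real. x \<in> {0..1} \<longrightarrow> y \<in> {0..1} \<longrightarrow>
            (coherent [(C, A, x), (C, B, y), (C, A \<union> B, z)] \<longleftrightarrow>
               zlow x y \<le> z \<and> z \<le> zupp x y))
       \<and> (\<forall>\<alpha>1 \<beta>1 \<alpha>2 \<beta>2 :: real.
            0 \<le> \<alpha>1 \<longrightarrow> \<alpha>1 \<le> \<beta>1 \<longrightarrow> \<beta>1 \<le> 1 \<longrightarrow>
            0 \<le> \<alpha>2 \<longrightarrow> \<alpha>2 \<le> \<beta>2 \<longrightarrow> \<beta>2 \<le> 1 \<longrightarrow>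
            (\<alpha>1, \<alpha>2) \<noteq> (0, 0) \<longrightarrow> (\<beta>1, \<beta>2) \<noteq> (1, 1) \<longrightarrow>
            {z. \<exists>x \<in> {\<alpha>1..\<beta>1}. \<exists>y \<in> {\<alpha>2..\<beta>2}.
                   coherent [(C, A, x), (C, B, y), (C, A \<union> B, z)]}
            = {\<alpha>1 * \<alpha>2 / (\<alpha>1 + \<alpha>2 - \<alpha>1 * \<alpha>2) ..
               (\<beta>1 + \<beta>2 - 2 * \<beta>1 * \<beta>2) / (1 - \<beta>1 * \<beta>2)})"
proof (intro conjI allI impI)
  fix x y z :: real
  assume "x \<in> {0..1}" "y \<in> {0..1}"
  then show "coherent [(C, A, x), (C, B, y), (C, A \<union> B, z)] \<longleftrightarrow> zlow x y \<le> z \<and> z \<le> zupp x y"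
    using coherent_iff_between[OF indep] by simp
next
  fix \<alpha>1 \<beta>1 \<alpha>2 \<beta>2 :: real
  assume bounds: "0 \<le> \<alpha>1" "\<alpha>1 \<le> \<beta>1" "\<beta>1 \<le> 1" "0 \<le> \<alpha>2" "\<alpha>2 \<le> \<beta>2" "\<beta>2 \<le> 1"
    and "(\<alpha>1, \<alpha>2) \<noteq> (0, 0)" "(\<beta>1, \<beta>2) \<noteq> (1, 1)"
  have "{z. \<exists>x\<in>{\<alpha>1..\<beta>1}. \<exists>y\<in>{\<alpha>2..\<beta>2}. coherent [(C, A, x), (C, B, y), (C, A \<union> B, z)]}
      = {z. \<exists>x\<in>{\<alpha>1..\<beta>1}. \<exists>y\<in>{\<alpha>2..\<beta>2}. zlow x y \<le> z \<and> z \<le> zupp x y}"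
    using coherent_iff_between[OF indep] bounds by (intro Collect_cong bex_cong refl) auto
  also have "\<dots> = {zlow \<alpha>1 \<alpha>2 .. zupp \<beta>1 \<beta>2}"
    using zlow_zupp_range[OF bounds] .
  also have "\<dots> = {\<alpha>1 * \<alpha>2 / (\<alpha>1 + \<alpha>2 - \<alpha>1 * \<alpha>2) .. (\<beta>1 + \<beta>2 - 2 * \<beta>1 * \<beta>2) / (1 - \<beta>1 * \<beta>2)}"
    using \<open>(\<alpha>1, \<alpha>2) \<noteq> (0, 0)\<close> \<open>(\<beta>1, \<beta>2) \<noteq> (1, 1)\<close> by (simp add: zlow_def zupp_def)
  finally show "{z. \<exists>x\<in>{\<alpha>1..\<beta>1}. \<exists>y\<in>{\<alpha>2..\<beta>2}. coherent [(C, A, x), (C, B, y), (C, A \<union> B, z)]}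
      = {\<alpha>1 * \<alpha>2 / (\<alpha>1 + \<alpha>2 - \<alpha>1 * \<alpha>2) .. (\<beta>1 + \<beta>2 - 2 * \<beta>1 * \<beta>2) / (1 - \<beta>1 * \<beta>2)}" .
qed

end
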